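(* Let $A$ and $B$ be self-adjoint operators on the same complex Hilbert space, with $B$ bounded and non-negative. If $B \neq 0$, then $\bigcup_{t\in\mathbb{R}} \sigma(A+tB)$ is a dense subset of $\mathbb{R}$.
   Context: $\sigma(T)$ denotes the spectrum of an operator $T$. $A$ may be unbounded; $A+tB$ is defined on the domain of $A$. *)

theory Defs
  imports "HOL-Analysis.Analysis"
begin

text \<open>HOL-Analysis only has real inner product spaces, so we introduce complex Hilbert
spaces as a type class: a (real) Banach space carrying a complex scalar multiplication
extending the real one, and a complex inner product (conjugate-linear in the first
argument, linear in the second) that induces the norm.\<close>

class chilbert_space = banach +
  fixes scaleC :: "complex \<Rightarrow> 'a \<Rightarrow> 'a" (infixr \<open>*\<^sub>C\<close> 75)
    and cinner :: "'a \<Rightarrow> 'a \<Rightarrow> complex"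
  assumes scaleC_of_real: "scaleC (complex_of_real r) x = scaleR r x"
    and scaleC_add_right: "scaleC a (x + y) = scaleC a x + scaleC a y"
    and scaleC_add_left: "scaleC (a + b) x = scaleC a x + scaleC b x"
    and scaleC_scaleC: "scaleC a (scaleC b x) = scaleC (a * b) x"
    and scaleC_one: "scaleC 1 x = x"
    and cinner_add_left: "cinner (x + y) z = cinner x z + cinner y z"
    and cinner_scaleC_left: "cinner (scaleC a x) y = cnj a * cinner x y"
    and cinner_commute: "cinner x y = cnj (cinner y x)"
    and cinner_self_nonneg: "0 \<le> Re (cinner x x)"
    and cinner_self_eq_zero: "cinner x x = 0 \<longleftrightarrow> x = 0"
    and norm_eq_sqrt_cinner: "norm x = sqrt (Re (cinner x x))"

section \<open>(Possibly unbounded) operators, given by a domain and an action on it\<close>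

definition complex_subspace :: "'a::chilbert_space set \<Rightarrow> bool" where
  "complex_subspace D \<longleftrightarrow> 0 \<in> D \<and> (\<forall>x\<in>D. \<forall>y\<in>D. x + y \<in> D) \<and> (\<forall>c. \<forall>x\<in>D. c *\<^sub>C x \<in> D)"

definition clinear_on :: "'a::chilbert_space set \<Rightarrow> ('a \<Rightarrow> 'a) \<Rightarrow> bool" where
  "clinear_on D T \<longleftrightarrow> (\<forall>x\<in>D. \<forall>y\<in>D. T (x + y) = T x + T y) \<and> (\<forall>c. \<forall>x\<in>D. T (c *\<^sub>C x) = c *\<^sub>C T x)"

definition adjoint_domain :: "'a::chilbert_space set \<Rightarrow> ('a \<Rightarrow> 'a) \<Rightarrow> 'a set" where
  "adjoint_domain D T = {y. \<exists>z. \<forall>x\<in>D. cinner (T x) y = cinner x z}"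

text \<open>Self-adjoint: densely defined linear operator with \<open>T* = T\<close>, i.e. the adjoint has the
same domain and acts as \<open>T\<close> on it.\<close>
definition self_adjoint_op :: "'a::chilbert_space set \<Rightarrow> ('a \<Rightarrow> 'a) \<Rightarrow> bool" where
  "self_adjoint_op D T \<longleftrightarrow> complex_subspace D \<and> closure D = UNIV \<and> clinear_on D T \<and>
     adjoint_domain D T = D \<and> (\<forall>x\<in>D. \<forall>y\<in>D. cinner (T x) y = cinner x (T y))"

definition bounded_op :: "('a::chilbert_space \<Rightarrow> 'a) \<Rightarrow> bool" where
  "bounded_op T \<longleftrightarrow> clinear_on UNIV T \<and> (\<exists>K. \<forall>x. norm (T x) \<le> K * norm x)"

definition nonneg_op :: "('a::chilbert_space \<Rightarrow> 'a) \<Rightarrow> bool" where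
  "nonneg_op T \<longleftrightarrow> (\<forall>x. 0 \<le> Re (cinner x (T x)) \<and> Im (cinner x (T x)) = 0)"

text \<open>Spectrum: \<open>\<lambda>\<close> is in the resolvent set iff \<open>T - \<lambda>\<close> maps \<open>D\<close> bijectively onto the
whole space with a bounded inverse.\<close>
definition op_spectrum :: "'a::chilbert_space set \<Rightarrow> ('a \<Rightarrow> 'a) \<Rightarrow> complex set" where
  "op_spectrum D T = {l. \<not> (bij_betw (\<lambda>x. T x - l *\<^sub>C x) D UNIV \<and>
       (\<exists>C. \<forall>x\<in>D. norm x \<le> C * norm (T x - l *\<^sub>C x)))}"

end

theory Submission
  imports Defs
begin

(* Suppose no A + tB has spectrum in (r - e, r + e).  Then every c in this interval has a bounded
   self-adjoint resolvent R_c = (A - c)^-1, and <Bx, R_c Bx> = 0 for all x: otherwise, for a sign s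
   and M the supremum of s <By, R_c By> / <y, By>, the number c would be an approximate eigenvalue
   of A - (s / M) B.  Comparing R_c Bx and R_d Bx for two close points c, d of the interval
   through the resolvent identity then gives Bx = 0.  The spectra are real because every A + tB is
   self-adjoint. *)

lemma scaleC_zero_left [simp]: "(0::complex) *\<^sub>C (x::'a::chilbert_space) = 0"
  using scaleC_of_real[of 0 x] by simp

lemma scaleC_zero_right [simp]: "c *\<^sub>C (0::'a::chilbert_space) = 0"
  using scaleC_add_right[of c "0::'a" 0] by simp

lemma scaleC_minus_right: "c *\<^sub>C (- (x::'a::chilbert_space)) = - (c *\<^sub>C x)"
  using scaleC_add_right[of c x "-x"] by (simp add: add_eq_0_iff)

lemma scaleC_minus_left: "(- c) *\<^sub>C (x::'a::chilbert_space) = - (c *\<^sub>C x)"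
  using scaleC_add_left[of c "-c" x] by (simp add: add_eq_0_iff)

lemma scaleC_diff_right: "c *\<^sub>C ((x::'a::chilbert_space) - y) = c *\<^sub>C x - c *\<^sub>C y"
  using scaleC_add_right[of c x "-y"] by (simp add: scaleC_minus_right)

lemma scaleC_diff_left: "(a - b) *\<^sub>C (x::'a::chilbert_space) = a *\<^sub>C x - b *\<^sub>C x"
  using scaleC_add_left[of a "-b" x] by (simp add: scaleC_minus_left)

lemma scaleC_scaleR_commute: "c *\<^sub>C (r *\<^sub>R (x::'a::chilbert_space)) = r *\<^sub>R (c *\<^sub>C x)"
  by (metis scaleC_of_real scaleC_scaleC mult.commute)

lemma cinner_add_right: "cinner (x::'a::chilbert_space) (y + z) = cinner x y + cinner x z"
  by (metis cinner_add_left cinner_commute complex_cnj_add)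

lemma cinner_scaleC_right: "cinner (x::'a::chilbert_space) (c *\<^sub>C y) = c * cinner x y"
  by (metis cinner_scaleC_left cinner_commute complex_cnj_mult complex_cnj_cnj)

lemma cinner_zero_left [simp]: "cinner (0::'a::chilbert_space) y = 0"
  using cinner_add_left[of "0::'a" 0 y] by simp

lemma cinner_zero_right [simp]: "cinner (x::'a::chilbert_space) 0 = 0"
  using cinner_add_right[of x "0::'a" 0] by simp

lemma cinner_minus_left: "cinner (- (x::'a::chilbert_space)) y = - cinner x y"
  using cinner_add_left[of x "-x" y] by (simp add: add_eq_0_iff)

lemma cinner_minus_right: "cinner (x::'a::chilbert_space) (- y) = - cinner x y"
  using cinner_add_right[of x y "-y"] by (simp add: add_eq_0_iff)

lemma cinner_diff_left: "cinner ((x::'a::chilbert_space) - y) z = cinner x z - cinner y z"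
  using cinner_add_left[of x "-y" z] by (simp add: cinner_minus_left)

lemma cinner_diff_right: "cinner (x::'a::chilbert_space) (y - z) = cinner x y - cinner x z"
  using cinner_add_right[of x y "-z"] by (simp add: cinner_minus_right)

lemma cinner_scaleR_left: "cinner (r *\<^sub>R (x::'a::chilbert_space)) y = of_real r * cinner x y"
  by (metis cinner_scaleC_left scaleC_of_real complex_cnj_complex_of_real)

lemma cinner_scaleR_right: "cinner (x::'a::chilbert_space) (r *\<^sub>R y) = of_real r * cinner x y"
  by (metis cinner_scaleC_right scaleC_of_real)

lemma Im_cinner_self [simp]: "Im (cinner (x::'a::chilbert_space) x) = 0"
  by (metis cinner_commute cnj.sel(2) neg_equal_zero)

lemma power2_norm_eq_cinner: "(norm (x::'a::chilbert_space))\<^sup>2 = Re (cinner x x)"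
  using norm_eq_sqrt_cinner[of x] cinner_self_nonneg[of x] by simp

lemma cinner_self_eq_norm: "cinner (x::'a::chilbert_space) x = of_real ((norm x)\<^sup>2)"
  by (simp add: power2_norm_eq_cinner complex_eq_iff)

lemma norm_scaleC: "norm (c *\<^sub>C (x::'a::chilbert_space)) = cmod c * norm x"
proof -
  have "(norm (c *\<^sub>C x))\<^sup>2 = Re (cnj c * c * cinner x x)"
    by (simp only: power2_norm_eq_cinner cinner_scaleC_left cinner_scaleC_right ac_simps)
  also have "\<dots> = (cmod c * norm x)\<^sup>2"
    unfolding cinner_self_eq_norm complex_mult_cnj[symmetric]
    by (simp add: power_mult_distrib del: of_real_power) (metis cmod_power2 power2_eq_square)
  finally show ?thesis
    by (metis norm_ge_zero power2_eq_imp_eq zero_le_mult_iff)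
qed

lemma bounded_linear_scaleC: "bounded_linear (\<lambda>x::'a::chilbert_space. c *\<^sub>C x)"
  by (rule bounded_linear_intro[of _ "cmod c"])
    (simp_all add: scaleC_add_right scaleC_scaleR_commute norm_scaleC)

lemmas tendsto_scaleC = bounded_linear.tendsto[OF bounded_linear_scaleC]

lemma norm_add_power2:
  "(norm ((x::'a::chilbert_space) + y))\<^sup>2 = (norm x)\<^sup>2 + 2 * Re (cinner x y) + (norm y)\<^sup>2"
proof -
  have "Re (cinner y x) = Re (cinner x y)" by (metis cinner_commute cnj.sel(1))
  then show ?thesis by (simp add: power2_norm_eq_cinner cinner_add_left cinner_add_right)
qed

lemma norm_diff_power2:
  "(norm ((x::'a::chilbert_space) - y))\<^sup>2 = (norm x)\<^sup>2 - 2 * Re (cinner x y) + (norm y)\<^sup>2"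
  using norm_add_power2[of x "-y"] by (simp add: cinner_minus_right)

lemma parallelogram_law:
  "(norm ((x::'a::chilbert_space) + y))\<^sup>2 + (norm (x - y))\<^sup>2 = 2 * (norm x)\<^sup>2 + 2 * (norm y)\<^sup>2"
  by (simp add: norm_add_power2 norm_diff_power2)

section \<open>Cauchy--Schwarz inequalities\<close>

lemma nonneg_quadratic_imp_le:
  fixes a b s :: real
  assumes "0 \<le> a" "0 \<le> b" "0 \<le> s" and nonneg: "\<And>r. 0 \<le> a - 2 * r * s + r\<^sup>2 * s * b"
  shows "s \<le> a * b"
proof (cases "s = 0")
  case False
  then have "s > 0" using assms by simp
  show ?thesis
  proof (cases "b = 0")
    case True
    have "0 \<le> a - 2 * ((a + 1) / (2 * s)) * s" using nonneg[of "(a + 1) / (2 * s)"] True by simp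
    with \<open>s > 0\<close> show ?thesis by (simp add: field_simps)
  next
    case False
    then have "b > 0" using assms by simp
    have "0 \<le> a - 2 * (1 / b) * s + (1 / b)\<^sup>2 * s * b" by (rule nonneg)
    with \<open>b > 0\<close> have "s / b \<le> a" by (simp add: field_simps power2_eq_square)
    with \<open>b > 0\<close> show ?thesis by (simp add: field_simps)
  qed
qed (use assms in simp)

lemma self_adjoint_op_UNIV_iff:
  "self_adjoint_op UNIV K \<longleftrightarrow> clinear_on UNIV K \<and> (\<forall>u v. cinner (K u) v = cinner u (K v))"
  by (auto simp: self_adjoint_op_def complex_subspace_def adjoint_domain_def)

text \<open>The real quadratic \<open>r \<mapsto> \<langle>u + m v, K (u + m v)\<rangle>\<close> with \<open>m = -r \<langle>u, K v\<rangle>\<^sup>*\<close> is non-negative.\<close>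
lemma cinner_op_Cauchy_Schwarz:
  fixes K :: "'a::chilbert_space \<Rightarrow> 'a"
  assumes "self_adjoint_op UNIV K" and pos: "\<And>u. 0 \<le> Re (cinner u (K u))"
  shows "(cmod (cinner u (K v)))\<^sup>2 \<le> Re (cinner u (K u)) * Re (cinner v (K v))"
proof -
  have K_add: "\<And>x y. K (x + y) = K x + K y" and K_scaleC: "\<And>c x. K (c *\<^sub>C x) = c *\<^sub>C K x"
    and sym: "\<And>u v. cinner (K u) v = cinner u (K v)"
    using assms(1) unfolding self_adjoint_op_UNIV_iff clinear_on_def by auto
  define z where "z = cinner u (K v)"
  have z_cnj: "cinner v (K u) = cnj z"
    unfolding z_def by (metis sym cinner_commute)
  have v_real: "cinner v (K v) = of_real (Re (cinner v (K v)))"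
    by (metis cinner_commute Reals_cnj_iff of_real_Re sym)
  have zz: "cnj z * z = of_real ((cmod z)\<^sup>2)" "z * cnj z = of_real ((cmod z)\<^sup>2)"
    by (metis complex_norm_square mult.commute)+
  have "0 \<le> Re (cinner u (K u)) - 2 * r * (cmod z)\<^sup>2 + r\<^sup>2 * (cmod z)\<^sup>2 * Re (cinner v (K v))" for r
  proof -
    define m where "m = - (of_real r * cnj z)"
    have "cinner (u + m *\<^sub>C v) (K (u + m *\<^sub>C v)) =
        cinner u (K u) + m * z + cnj m * cnj z + cnj m * m * cinner v (K v)"
      unfolding K_add K_scaleC cinner_add_left cinner_add_right cinner_scaleC_left
        cinner_scaleC_right z_cnj z_def
      by (simp add: algebra_simps)
    also have "\<dots> = cinner u (K u) - 2 * of_real (r * (cmod z)\<^sup>2)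
        + of_real (r\<^sup>2 * (cmod z)\<^sup>2 * Re (cinner v (K v)))"
    proof -
      have "m * z = - of_real (r * (cmod z)\<^sup>2)" "cnj m * cnj z = - of_real (r * (cmod z)\<^sup>2)"
        by (simp_all add: m_def mult.assoc zz)
      moreover have "cnj m * m = of_real (r\<^sup>2 * (cmod z)\<^sup>2)"
        by (simp add: m_def power2_eq_square mult.assoc mult.left_commute[of "cnj z"] zz)
      ultimately show ?thesis
        by (subst v_real) (simp add: algebra_simps)
    qed
    finally show ?thesis
      using pos[of "u + m *\<^sub>C v"] by simp
  qed
  then have "(cmod z)\<^sup>2 \<le> Re (cinner u (K u)) * Re (cinner v (K v))"
    by (intro nonneg_quadratic_imp_le) (auto simp: pos)
  then show ?thesis by (simp add: z_def)
qed

lemma norm_cinner_le: "cmod (cinner (x::'a::chilbert_space) y) \<le> norm x * norm y"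
proof -
  have "self_adjoint_op UNIV (\<lambda>x::'a. x)"
    by (simp add: self_adjoint_op_UNIV_iff clinear_on_def)
  from cinner_op_Cauchy_Schwarz[OF this, of x y]
  have "(cmod (cinner x y))\<^sup>2 \<le> (norm x * norm y)\<^sup>2"
    by (simp add: power2_norm_eq_cinner power_mult_distrib cinner_self_nonneg)
  then show ?thesis by (rule power2_le_imp_le) simp
qed

lemma bounded_bilinear_cinner: "bounded_bilinear (cinner :: 'a::chilbert_space \<Rightarrow> 'a \<Rightarrow> complex)"
proof (rule bounded_bilinear.intro)
  show "\<exists>K. \<forall>x y :: 'a. norm (cinner x y) \<le> norm x * norm y * K"
    by (intro exI[of _ 1] allI) (simp add: norm_cinner_le)
qed (simp_all add: cinner_add_left cinner_add_right cinner_scaleR_left cinner_scaleR_right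
    scaleR_conv_of_real)

lemmas tendsto_cinner = bounded_bilinear.tendsto[OF bounded_bilinear_cinner]

lemma complex_subspace_zero: "complex_subspace D \<Longrightarrow> 0 \<in> D"
  unfolding complex_subspace_def by blast

lemma complex_subspace_add: "complex_subspace D \<Longrightarrow> x \<in> D \<Longrightarrow> y \<in> D \<Longrightarrow> x + y \<in> D"
  unfolding complex_subspace_def by blast

lemma complex_subspace_scaleC: "complex_subspace D \<Longrightarrow> x \<in> D \<Longrightarrow> c *\<^sub>C x \<in> D"
  unfolding complex_subspace_def by blast

lemma complex_subspace_scaleR: "complex_subspace D \<Longrightarrow> x \<in> D \<Longrightarrow> r *\<^sub>R x \<in> D"
  using complex_subspace_scaleC[of D x "of_real r"] by (simp add: scaleC_of_real)

lemma complex_subspace_diff: "complex_subspace D \<Longrightarrow> x \<in> D \<Longrightarrow> y \<in> D \<Longrightarrow> x - y \<in> D"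
  using complex_subspace_add[of D x "(-1) *\<^sub>R y"] complex_subspace_scaleR[of D y "-1"] by simp

lemma clinear_on_add: "clinear_on D T \<Longrightarrow> x \<in> D \<Longrightarrow> y \<in> D \<Longrightarrow> T (x + y) = T x + T y"
  unfolding clinear_on_def by blast

lemma clinear_on_scaleC: "clinear_on D T \<Longrightarrow> x \<in> D \<Longrightarrow> T (c *\<^sub>C x) = c *\<^sub>C T x"
  unfolding clinear_on_def by blast

lemma clinear_on_scaleR: "clinear_on D T \<Longrightarrow> x \<in> D \<Longrightarrow> T (r *\<^sub>R x) = r *\<^sub>R T x"
  using clinear_on_scaleC[of D T x "of_real r"] by (simp add: scaleC_of_real)

lemma clinear_on_diff:
  "complex_subspace D \<Longrightarrow> clinear_on D T \<Longrightarrow> x \<in> D \<Longrightarrow> y \<in> D \<Longrightarrow> T (x - y) = T x - T y"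
  using clinear_on_add[of D T x "(-1) *\<^sub>R y"] clinear_on_scaleR[of D T y "-1"]
    complex_subspace_scaleR[of D y "-1"]
  by simp

lemma clinear_on_zero: "complex_subspace D \<Longrightarrow> clinear_on D T \<Longrightarrow> T 0 = 0"
  using clinear_on_scaleC[of D T 0 0] complex_subspace_zero[of D] by simp

lemma clinear_on_shift:
  assumes "clinear_on D T"
  shows "clinear_on D (\<lambda>x. T x - l *\<^sub>C x)"
proof -
  have "T (x + y) - l *\<^sub>C (x + y) = (T x - l *\<^sub>C x) + (T y - l *\<^sub>C y)" if "x \<in> D" "y \<in> D" for x y
    using clinear_on_add[OF assms that] by (simp add: scaleC_add_right)
  moreover have "T (c *\<^sub>C x) - l *\<^sub>C (c *\<^sub>C x) = c *\<^sub>C (T x - l *\<^sub>C x)" if "x \<in> D" for c x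
  proof -
    have "l *\<^sub>C (c *\<^sub>C x) = c *\<^sub>C (l *\<^sub>C x)" by (simp add: scaleC_scaleC mult.commute)
    then show ?thesis using clinear_on_scaleC[OF assms that] by (simp add: scaleC_diff_right)
  qed
  ultimately show ?thesis by (simp add: clinear_on_def)
qed

lemma complex_subspace_image:
  assumes "complex_subspace D" "clinear_on D T"
  shows "complex_subspace (T ` D)"
  unfolding complex_subspace_def
proof (intro conjI ballI allI)
  show "0 \<in> T ` D"
    using assms clinear_on_zero complex_subspace_zero by (metis image_eqI)
next
  fix u v assume "u \<in> T ` D" "v \<in> T ` D"
  then show "u + v \<in> T ` D"
    using assms by (auto simp: clinear_on_add[symmetric] complex_subspace_add)
next
  fix c u assume "u \<in> T ` D"
  then show "c *\<^sub>C u \<in> T ` D"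
    using assms by (auto simp: clinear_on_scaleC[symmetric] complex_subspace_scaleC)
qed

section \<open>Orthogonal projections\<close>

lemma orthogonal_if_norm_le_add_scaleC:
  assumes min: "\<And>\<mu>. norm (y::'a::chilbert_space) \<le> norm (y + \<mu> *\<^sub>C v)"
  shows "cinner y v = 0"
proof -
  define g where "g = cinner y v"
  have "0 \<le> 0 - 2 * r * (cmod g)\<^sup>2 + r\<^sup>2 * (cmod g)\<^sup>2 * (norm v)\<^sup>2" for r
  proof -
    define m where "m = - (of_real r * cnj g)"
    have "cnj g * g = of_real ((cmod g)\<^sup>2)"
      by (metis complex_norm_square mult.commute)
    then have "Re (m * g) = - r * (cmod g)\<^sup>2"
      by (simp add: m_def mult.assoc del: of_real_power)
    moreover have "(cmod m)\<^sup>2 = r\<^sup>2 * (cmod g)\<^sup>2"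
      by (simp add: m_def norm_mult power_mult_distrib)
    moreover have "(norm (y + m *\<^sub>C v))\<^sup>2 = (norm y)\<^sup>2 + 2 * Re (m * g) + (cmod m)\<^sup>2 * (norm v)\<^sup>2"
      by (simp add: norm_add_power2 cinner_scaleC_right norm_scaleC power_mult_distrib g_def)
    moreover have "(norm y)\<^sup>2 \<le> (norm (y + m *\<^sub>C v))\<^sup>2"
      using min[of m] by (simp add: power_mono)
    ultimately show ?thesis by simp
  qed
  then have "(cmod g)\<^sup>2 \<le> 0 * (norm v)\<^sup>2"
    by (intro nonneg_quadratic_imp_le) auto
  then show ?thesis by (simp add: g_def)
qed

lemma Cauchy_if_norm_diff_le:
  fixes X :: "nat \<Rightarrow> 'a::real_normed_vector"
  assumes le: "\<And>m n. norm (X m - X n) \<le> b m + b n" and "b \<longlonglongrightarrow> 0"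
  shows "Cauchy X"
proof (rule CauchyI)
  fix e :: real assume "e > 0"
  then obtain M where M: "\<And>n. n \<ge> M \<Longrightarrow> \<bar>b n\<bar> < e / 2"
    using LIMSEQ_D[OF \<open>b \<longlonglongrightarrow> 0\<close>, of "e / 2"] by auto
  have "norm (X m - X n) < e" if "m \<ge> M" "n \<ge> M" for m n
    using le[of m n] M[OF that(1)] M[OF that(2)] by linarith
  then show "\<exists>M. \<forall>m\<ge>M. \<forall>n\<ge>M. norm (X m - X n) < e" by blast
qed

text \<open>A minimizing sequence is Cauchy by the parallelogram law, because midpoints of its
  members stay in the set.\<close>
lemma exists_nearest_point:
  fixes V :: "'a::chilbert_space set"
  assumes "closed V" "V \<noteq> {}"
    and midpoint: "\<And>x y. x \<in> V \<Longrightarrow> y \<in> V \<Longrightarrow> (1/2) *\<^sub>R (x + y) \<in> V"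
  shows "\<exists>v\<in>V. \<forall>w\<in>V. norm (z - v) \<le> norm (z - w)"
proof -
  define \<delta> where "\<delta> = infdist z V"
  have \<delta>_le: "\<delta> \<le> norm (z - w)" if "w \<in> V" for w
    using infdist_le[OF that] by (simp add: \<delta>_def dist_norm)
  have "\<delta> \<ge> 0" by (simp add: \<delta>_def infdist_nonneg)
  have "\<exists>x\<in>V. (norm (z - x))\<^sup>2 < \<delta>\<^sup>2 + 1 / Suc n" for n
  proof -
    have "(INF x\<in>V. dist z x) < sqrt (\<delta>\<^sup>2 + 1 / Suc n)"
      unfolding \<delta>_def infdist_notempty[OF \<open>V \<noteq> {}\<close>, symmetric] by (rule real_less_rsqrt) simp
    moreover have "bdd_below ((\<lambda>x. dist z x) ` V)"
      by (rule bdd_belowI[of _ 0]) auto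
    ultimately obtain x where "x \<in> V" "norm (z - x) < sqrt (\<delta>\<^sup>2 + 1 / Suc n)"
      using cINF_less_iff[OF \<open>V \<noteq> {}\<close>] by (auto simp: dist_norm)
    then have "(norm (z - x))\<^sup>2 < (sqrt (\<delta>\<^sup>2 + 1 / Suc n))\<^sup>2"
      by (intro power_strict_mono) auto
    with \<open>x \<in> V\<close> show ?thesis by auto
  qed
  then obtain X where X_in: "\<And>n. X n \<in> V" and X_less: "\<And>n. (norm (z - X n))\<^sup>2 < \<delta>\<^sup>2 + 1 / Suc n"
    by metis
  have "norm (X m - X n) \<le> sqrt (2 / Suc m) + sqrt (2 / Suc n)" for m n
  proof -
    have "2 * \<delta> \<le> norm ((z - X m) + (z - X n))"
    proof -
      have "(z - X m) + (z - X n) = 2 *\<^sub>R (z - (1/2) *\<^sub>R (X m + X n))"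
        by (simp add: algebra_simps scaleR_2)
      then show ?thesis using \<delta>_le[OF midpoint[OF X_in X_in]] by simp
    qed
    then have mid: "(2 * \<delta>)\<^sup>2 \<le> (norm ((z - X m) + (z - X n)))\<^sup>2"
      using \<open>\<delta> \<ge> 0\<close> by (intro power_mono) auto
    have "(norm (X m - X n))\<^sup>2
        = 2 * (norm (z - X m))\<^sup>2 + 2 * (norm (z - X n))\<^sup>2 - (norm ((z - X m) + (z - X n)))\<^sup>2"
      using parallelogram_law[of "z - X m" "z - X n"] by (simp add: norm_minus_commute)
    also have "\<dots> \<le> 2 * (\<delta>\<^sup>2 + 1 / Suc m) + 2 * (\<delta>\<^sup>2 + 1 / Suc n) - (2 * \<delta>)\<^sup>2"
      using X_less[of m] X_less[of n] mid by (intro diff_mono add_mono) auto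
    also have "\<dots> = 2 / Suc m + 2 / Suc n"
      by (simp add: algebra_simps)
    finally have "norm (X m - X n) \<le> sqrt (2 / Suc m + 2 / Suc n)"
      by (simp add: real_le_rsqrt)
    also have "\<dots> \<le> sqrt (2 / Suc m) + sqrt (2 / Suc n)"
      by (rule sqrt_add_le_add_sqrt) auto
    finally show ?thesis .
  qed
  moreover have "(\<lambda>n. sqrt (2 / real (Suc n))) \<longlonglongrightarrow> 0"
    using tendsto_real_sqrt[OF tendsto_mult[OF tendsto_const LIMSEQ_inverse_real_of_nat, of 2]]
    by (simp add: divide_inverse)
  ultimately have "Cauchy X" by (rule Cauchy_if_norm_diff_le)
  then obtain v where v: "X \<longlonglongrightarrow> v" using Cauchy_convergent_iff convergent_def by blast
  have "v \<in> V" using \<open>closed V\<close> X_in v closed_sequential_limits by blast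
  have "(\<lambda>n. (norm (z - X n))\<^sup>2) \<longlonglongrightarrow> (norm (z - v))\<^sup>2"
    by (intro tendsto_intros v)
  moreover have "(\<lambda>n. \<delta>\<^sup>2 + 1 / Suc n) \<longlonglongrightarrow> \<delta>\<^sup>2 + 0"
    using LIMSEQ_inverse_real_of_nat by (intro tendsto_add tendsto_const) (simp add: inverse_eq_divide)
  ultimately have "(norm (z - v))\<^sup>2 \<le> \<delta>\<^sup>2"
    using X_less by (intro LIMSEQ_le) (auto intro: less_imp_le)
  then have "norm (z - v) \<le> \<delta>" using \<open>\<delta> \<ge> 0\<close> by (rule power2_le_imp_le)
  with \<open>v \<in> V\<close> \<delta>_le show ?thesis by force
qed

lemma exists_orthogonal_projection:
  fixes V :: "'a::chilbert_space set"
  assumes "complex_subspace V" "closed V"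
  shows "\<exists>v\<in>V. \<forall>u\<in>V. cinner (z - v) u = 0"
proof -
  have "\<exists>v\<in>V. \<forall>w\<in>V. norm (z - v) \<le> norm (z - w)"
    using assms by (intro exists_nearest_point)
      (auto intro: complex_subspace_zero complex_subspace_scaleR complex_subspace_add)
  then obtain v where "v \<in> V" and v_min: "\<And>w. w \<in> V \<Longrightarrow> norm (z - v) \<le> norm (z - w)"
    by blast
  have "cinner (z - v) u = 0" if "u \<in> V" for u
  proof (rule orthogonal_if_norm_le_add_scaleC)
    fix \<mu>
    have "v - \<mu> *\<^sub>C u \<in> V"
      using assms(1) \<open>v \<in> V\<close> that by (intro complex_subspace_diff complex_subspace_scaleC)
    then have "norm (z - v) \<le> norm (z - (v - \<mu> *\<^sub>C u))" by (rule v_min)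
    also have "z - (v - \<mu> *\<^sub>C u) = z - v + \<mu> *\<^sub>C u" by (simp add: algebra_simps)
    finally show "norm (z - v) \<le> norm (z - v + \<mu> *\<^sub>C u)" .
  qed
  with \<open>v \<in> V\<close> show ?thesis by blast
qed

lemma eq_0_if_orthogonal_dense:
  assumes "closure D = UNIV" and orth: "\<And>w. w \<in> D \<Longrightarrow> cinner w v = 0"
  shows "v = (0::'a::chilbert_space)"
proof -
  obtain X where X: "\<And>n. X n \<in> D" "X \<longlonglongrightarrow> v"
    using \<open>closure D = UNIV\<close> by (metis UNIV_I closure_sequential)
  have "(\<lambda>n. cinner (X n) v) \<longlonglongrightarrow> cinner v v"
    by (rule tendsto_cinner[OF X(2) tendsto_const])
  moreover have "(\<lambda>n. cinner (X n) v) = (\<lambda>n. 0)" using orth X(1) by auto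
  ultimately have "cinner v v = 0" using LIMSEQ_unique tendsto_const by metis
  then show ?thesis using cinner_self_eq_zero by blast
qed

section \<open>Self-adjoint operators\<close>

lemma self_adjoint_op_cinner_commute:
  "self_adjoint_op D S \<Longrightarrow> x \<in> D \<Longrightarrow> y \<in> D \<Longrightarrow> cinner (S x) y = cinner x (S y)"
  unfolding self_adjoint_op_def by blast

lemma self_adjoint_op_Im_cinner:
  "self_adjoint_op D S \<Longrightarrow> x \<in> D \<Longrightarrow> Im (cinner x (S x)) = 0"
  using self_adjoint_op_cinner_commute[of D S x x] cinner_commute[of "S x" x]
  by (metis cnj.sel(2) neg_equal_zero)

lemma self_adjoint_op_norm_shift_ge:
  assumes sa: "self_adjoint_op D S" and x: "x \<in> D"
  shows "\<bar>Im l\<bar> * norm x \<le> norm (S x - l *\<^sub>C x)"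
proof -
  have "Im (cinner x (S x - l *\<^sub>C x)) = - Im l * (norm x)\<^sup>2"
    using self_adjoint_op_Im_cinner[OF sa x]
    by (simp add: cinner_diff_right cinner_scaleC_right cinner_self_eq_norm del: of_real_power)
  then have "\<bar>Im l\<bar> * (norm x)\<^sup>2 \<le> cmod (cinner x (S x - l *\<^sub>C x))"
    by (metis abs_Im_le_cmod abs_minus_cancel abs_mult abs_power2)
  also have "\<dots> \<le> norm x * norm (S x - l *\<^sub>C x)" by (rule norm_cinner_le)
  finally have "norm x * (\<bar>Im l\<bar> * norm x) \<le> norm x * norm (S x - l *\<^sub>C x)"
    by (simp add: power2_eq_square algebra_simps)
  then show ?thesis
    by (cases "norm x = 0") (simp_all add: mult_le_cancel_left)
qed

lemma self_adjoint_op_closed_graph: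
  assumes sa: "self_adjoint_op D S" and X: "\<And>n. X n \<in> D" and "X \<longlonglongrightarrow> x"
    and "(\<lambda>n. S (X n)) \<longlonglongrightarrow> w"
  shows "x \<in> D \<and> S x = w"
proof -
  have adj: "cinner (S u) x = cinner u w" if "u \<in> D" for u
  proof -
    have "(\<lambda>n. cinner (S u) (X n)) \<longlonglongrightarrow> cinner (S u) x"
      by (intro tendsto_cinner tendsto_const \<open>X \<longlonglongrightarrow> x\<close>)
    moreover have "(\<lambda>n. cinner (S u) (X n)) = (\<lambda>n. cinner u (S (X n)))"
      using self_adjoint_op_cinner_commute[OF sa that X] by auto
    moreover have "(\<lambda>n. cinner u (S (X n))) \<longlonglongrightarrow> cinner u w"
      by (intro tendsto_cinner tendsto_const \<open>(\<lambda>n. S (X n)) \<longlonglongrightarrow> w\<close>)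
    ultimately show ?thesis using LIMSEQ_unique by metis
  qed
  then have "x \<in> adjoint_domain D S" unfolding adjoint_domain_def by blast
  then have "x \<in> D" using sa unfolding self_adjoint_op_def by blast
  have "cinner u (S x - w) = 0" if "u \<in> D" for u
    using adj[OF that] self_adjoint_op_cinner_commute[OF sa that \<open>x \<in> D\<close>]
    by (simp add: cinner_diff_right)
  then have "S x - w = 0"
    using sa eq_0_if_orthogonal_dense[of D "S x - w"] unfolding self_adjoint_op_def by blast
  with \<open>x \<in> D\<close> show ?thesis by simp
qed

lemma self_adjoint_op_shift_range_closed:
  assumes sa: "self_adjoint_op D S" and "Im l \<noteq> 0"
  shows "closed ((\<lambda>x. S x - l *\<^sub>C x) ` D)"
  unfolding closed_sequential_limits
proof (intro allI impI, elim conjE)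
  fix Y w assume "\<forall>n. Y n \<in> (\<lambda>x. S x - l *\<^sub>C x) ` D" and "Y \<longlonglongrightarrow> w"
  then have "\<forall>n. \<exists>x. x \<in> D \<and> Y n = S x - l *\<^sub>C x" by blast
  then obtain X where X: "\<And>n. X n \<in> D" and Y: "\<And>n. Y n = S (X n) - l *\<^sub>C X n"
    using choice[of "\<lambda>n x. x \<in> D \<and> Y n = S x - l *\<^sub>C x"] by blast
  have cs: "complex_subspace D" and lin: "clinear_on D S"
    using sa unfolding self_adjoint_op_def by auto
  have "Cauchy X"
  proof (rule CauchyI)
    fix e :: real assume "e > 0"
    then obtain M where M: "\<And>m n. m \<ge> M \<Longrightarrow> n \<ge> M \<Longrightarrow> norm (Y m - Y n) < \<bar>Im l\<bar> * e"
      using CauchyD[OF LIMSEQ_imp_Cauchy[OF \<open>Y \<longlonglongrightarrow> w\<close>], of "\<bar>Im l\<bar> * e"] \<open>Im l \<noteq> 0\<close>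
      by auto
    have "norm (X m - X n) < e" if "m \<ge> M" "n \<ge> M" for m n
    proof -
      have "Y m - Y n = S (X m - X n) - l *\<^sub>C (X m - X n)"
        using clinear_on_diff[OF cs clinear_on_shift[OF lin] X X] by (simp add: Y)
      then have "\<bar>Im l\<bar> * norm (X m - X n) \<le> norm (Y m - Y n)"
        using self_adjoint_op_norm_shift_ge[OF sa complex_subspace_diff[OF cs X X]] by simp
      also have "\<dots> < \<bar>Im l\<bar> * e" using M[OF that] .
      finally show ?thesis by (simp add: mult_less_cancel_left)
    qed
    then show "\<exists>M. \<forall>m\<ge>M. \<forall>n\<ge>M. norm (X m - X n) < e" by blast
  qed
  then obtain x where "X \<longlonglongrightarrow> x" using Cauchy_convergent_iff convergent_def by blast
  have "(\<lambda>n. S (X n)) \<longlonglongrightarrow> w + l *\<^sub>C x"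
  proof -
    have "(\<lambda>n. Y n + l *\<^sub>C X n) \<longlonglongrightarrow> w + l *\<^sub>C x"
      by (intro tendsto_add tendsto_scaleC \<open>Y \<longlonglongrightarrow> w\<close> \<open>X \<longlonglongrightarrow> x\<close>)
    then show ?thesis by (simp add: Y)
  qed
  with self_adjoint_op_closed_graph[OF sa X \<open>X \<longlonglongrightarrow> x\<close>]
  have "x \<in> D" "w = S x - l *\<^sub>C x" by auto
  then show "w \<in> (\<lambda>x. S x - l *\<^sub>C x) ` D" by blast
qed

text \<open>A vector orthogonal to the range of \<open>S - l\<close> lies in the domain of the adjoint and is an
  eigenvector of \<open>S\<^sup>* = S\<close> for the non-real eigenvalue \<open>l\<^sup>*\<close>.\<close>
lemma self_adjoint_op_orthogonal_shift_range:
  assumes sa: "self_adjoint_op D S" and "Im l \<noteq> 0"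
    and orth: "\<And>x. x \<in> D \<Longrightarrow> cinner y (S x - l *\<^sub>C x) = 0"
  shows "y = 0"
proof -
  have adj: "cinner (S u) y = cinner u (cnj l *\<^sub>C y)" if "u \<in> D" for u
  proof -
    have "cinner (S u - l *\<^sub>C u) y = 0"
      using orth[OF that] cinner_commute[of "S u - l *\<^sub>C u" y] by simp
    then show ?thesis
      by (simp add: cinner_diff_left cinner_scaleC_left cinner_scaleC_right)
  qed
  then have "y \<in> adjoint_domain D S" unfolding adjoint_domain_def by blast
  then have "y \<in> D" using sa unfolding self_adjoint_op_def by blast
  have "cinner u (S y - cnj l *\<^sub>C y) = 0" if "u \<in> D" for u
    using adj[OF that] self_adjoint_op_cinner_commute[OF sa that \<open>y \<in> D\<close>]
    by (simp add: cinner_diff_right)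
  then have "S y - cnj l *\<^sub>C y = 0"
    using sa eq_0_if_orthogonal_dense[of D] unfolding self_adjoint_op_def by blast
  then have "\<bar>Im l\<bar> * norm y \<le> 0"
    using self_adjoint_op_norm_shift_ge[OF sa \<open>y \<in> D\<close>, of "cnj l"] by simp
  with \<open>Im l \<noteq> 0\<close> show "y = 0" by (simp add: mult_le_0_iff)
qed

lemma self_adjoint_op_shift_surj:
  assumes sa: "self_adjoint_op D S" and "Im l \<noteq> 0"
  shows "(\<lambda>x. S x - l *\<^sub>C x) ` D = UNIV"
proof -
  let ?V = "(\<lambda>x. S x - l *\<^sub>C x) ` D"
  have "complex_subspace ?V"
    using sa by (intro complex_subspace_image clinear_on_shift) (auto simp: self_adjoint_op_def)
  moreover have "closed ?V" using assms by (rule self_adjoint_op_shift_range_closed)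
  ultimately have "z \<in> ?V" for z
  proof (elim exists_orthogonal_projection[where z = z, THEN bexE])
    fix v assume "v \<in> ?V" and "\<forall>u\<in>?V. cinner (z - v) u = 0"
    then have "z - v = 0"
      using self_adjoint_op_orthogonal_shift_range[OF assms] by blast
    with \<open>v \<in> ?V\<close> show "z \<in> ?V" by simp
  qed
  then show ?thesis by blast
qed

lemma self_adjoint_op_spectrum_real:
  assumes sa: "self_adjoint_op D S"
  shows "op_spectrum D S \<subseteq> \<real>"
proof
  fix l assume l: "l \<in> op_spectrum D S"
  show "l \<in> \<real>"
  proof (rule ccontr)
    assume "l \<notin> \<real>"
    then have "Im l \<noteq> 0" by (simp add: complex_is_Real_iff)
    have cs: "complex_subspace D" and lin: "clinear_on D S"
      using sa unfolding self_adjoint_op_def by auto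
    have bound: "norm x \<le> (1 / \<bar>Im l\<bar>) * norm (S x - l *\<^sub>C x)" if "x \<in> D" for x
      using self_adjoint_op_norm_shift_ge[OF sa that, of l] \<open>Im l \<noteq> 0\<close> by (simp add: field_simps)
    have "inj_on (\<lambda>x. S x - l *\<^sub>C x) D"
    proof (rule inj_onI)
      fix x y assume "x \<in> D" "y \<in> D" "S x - l *\<^sub>C x = S y - l *\<^sub>C y"
      then have "norm (x - y) \<le> 0"
        using bound[OF complex_subspace_diff[OF cs \<open>x \<in> D\<close> \<open>y \<in> D\<close>]]
          clinear_on_diff[OF cs clinear_on_shift[OF lin] \<open>x \<in> D\<close> \<open>y \<in> D\<close>, of l]
        by simp
      then show "x = y" by simp
    qed
    with self_adjoint_op_shift_surj[OF sa \<open>Im l \<noteq> 0\<close>] bound l show False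
      unfolding op_spectrum_def bij_betw_def by blast
  qed
qed

lemma self_adjoint_op_add_scaleR:
  assumes A: "self_adjoint_op D A" and B: "self_adjoint_op UNIV B"
  shows "self_adjoint_op D (\<lambda>x. A x + t *\<^sub>R B x)"
proof -
  have lin_A: "clinear_on D A"
    using A unfolding self_adjoint_op_def by auto
  have lin_B: "clinear_on UNIV B" and sym_B: "\<And>x y. cinner (B x) y = cinner x (B y)"
    using B unfolding self_adjoint_op_UNIV_iff by auto
  have lin: "clinear_on D (\<lambda>x. A x + t *\<^sub>R B x)"
    using lin_A lin_B unfolding clinear_on_def
    by (auto simp: scaleR_add_right scaleC_add_right scaleC_scaleR_commute)
  have shift: "cinner (A x + t *\<^sub>R B x) y = cinner (A x) y + cinner x (t *\<^sub>R B y)" for x y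
    by (simp add: cinner_add_left cinner_scaleR_left cinner_scaleR_right sym_B)
  have adj: "adjoint_domain D (\<lambda>x. A x + t *\<^sub>R B x) = adjoint_domain D A"
  proof (intro set_eqI iffI)
    fix y assume "y \<in> adjoint_domain D (\<lambda>x. A x + t *\<^sub>R B x)"
    then obtain z where "\<forall>x\<in>D. cinner (A x + t *\<^sub>R B x) y = cinner x z"
      unfolding adjoint_domain_def by blast
    then have "\<forall>x\<in>D. cinner (A x) y = cinner x (z - t *\<^sub>R B y)"
      by (simp add: shift cinner_diff_right eq_diff_eq)
    then show "y \<in> adjoint_domain D A" unfolding adjoint_domain_def by blast
  next
    fix y assume "y \<in> adjoint_domain D A"
    then obtain z where "\<forall>x\<in>D. cinner (A x) y = cinner x z"
      unfolding adjoint_domain_def by blast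
    then have "\<forall>x\<in>D. cinner (A x + t *\<^sub>R B x) y = cinner x (z + t *\<^sub>R B y)"
      by (simp add: shift cinner_add_right)
    then show "y \<in> adjoint_domain D (\<lambda>x. A x + t *\<^sub>R B x)" unfolding adjoint_domain_def by blast
  qed
  have "\<forall>x\<in>D. \<forall>y\<in>D. cinner (A x + t *\<^sub>R B x) y = cinner x (A y + t *\<^sub>R B y)"
    using self_adjoint_op_cinner_commute[OF A] by (simp add: shift cinner_add_right)
  with A lin adj show ?thesis unfolding self_adjoint_op_def by simp
qed

lemma bounded_opE:
  fixes T :: "'a::chilbert_space \<Rightarrow> 'a"
  assumes "bounded_op T"
  obtains K where "K > 0" "\<And>x. norm (T x) \<le> K * norm x"
proof -
  obtain K where K: "\<And>x. norm (T x) \<le> K * norm x"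
    using assms unfolding bounded_op_def by blast
  show ?thesis
  proof (rule that)
    show "norm (T x) \<le> max K 1 * norm x" for x
      using K[of x] mult_right_mono[of K "max K 1" "norm x"] by simp
  qed simp
qed

lemma bounded_op_scaleR:
  assumes "bounded_op T"
  shows "bounded_op (\<lambda>x. r *\<^sub>R T x)"
proof -
  obtain K where K: "\<And>x. norm (T x) \<le> K * norm x"
    using assms unfolding bounded_op_def by blast
  have "norm (r *\<^sub>R T x) \<le> (\<bar>r\<bar> * K) * norm x" for x
    using K[of x] by (simp add: mult.assoc mult_left_mono)
  with assms show ?thesis
    unfolding bounded_op_def clinear_on_def by (auto simp: scaleR_add_right scaleC_scaleR_commute)
qed

lemma bounded_op_diff:
  assumes "bounded_op S" "bounded_op T"
  shows "bounded_op (\<lambda>x. S x - T x)"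
proof -
  obtain K L where K: "\<And>x. norm (S x) \<le> K * norm x" and L: "\<And>x. norm (T x) \<le> L * norm x"
    using assms unfolding bounded_op_def by blast
  have "norm (S x - T x) \<le> (K + L) * norm x" for x
    using norm_triangle_ineq4[of "S x" "T x"] K[of x] L[of x] by (simp add: distrib_right)
  with assms show ?thesis
    unfolding bounded_op_def clinear_on_def by (auto simp: scaleC_diff_right)
qed

lemma bounded_op_comp:
  assumes "bounded_op S" "bounded_op T"
  shows "bounded_op (\<lambda>x. S (T x))"
proof -
  obtain K L where "K > 0" and K: "\<And>x. norm (S x) \<le> K * norm x"
    and L: "\<And>x. norm (T x) \<le> L * norm x"
    using assms by (metis bounded_opE)
  have "norm (S (T x)) \<le> (K * L) * norm x" for x
    using order_trans[OF K mult_left_mono[OF L]] \<open>K > 0\<close> by (simp add: mult.assoc)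
  with assms show ?thesis
    unfolding bounded_op_def clinear_on_def by auto
qed

lemma nonneg_op_Re_cinner: "nonneg_op K \<Longrightarrow> 0 \<le> Re (cinner x (K x))"
  unfolding nonneg_op_def by blast

lemma nonneg_opI:
  assumes "self_adjoint_op UNIV K" "\<And>x. 0 \<le> Re (cinner x (K x))"
  shows "nonneg_op K"
  using assms self_adjoint_op_Im_cinner[OF assms(1)] unfolding nonneg_op_def by blast

text \<open>Cauchy--Schwarz for \<open>\<langle>_, K _\<rangle>\<close> applied to \<open>x\<close> and \<open>K x\<close>.\<close>
lemma norm_power2_le_nonneg_op:
  assumes "self_adjoint_op UNIV K" "nonneg_op K" and bound: "\<And>x. norm (K x) \<le> M * norm x"
  shows "(norm (K x))\<^sup>2 \<le> M * Re (cinner x (K x))"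
proof (cases "K x = 0")
  case False
  have sym: "\<And>u v. cinner (K u) v = cinner u (K v)"
    using assms(1) unfolding self_adjoint_op_UNIV_iff by blast
  have pos: "\<And>u. 0 \<le> Re (cinner u (K u))"
    using assms(2) by (rule nonneg_op_Re_cinner)
  have "cinner x (K (K x)) = of_real ((norm (K x))\<^sup>2)"
    using sym[of x "K x"] cinner_self_eq_norm[of "K x"] by (simp del: of_real_power)
  then have "cmod (cinner x (K (K x))) = (norm (K x))\<^sup>2"
    by (simp del: of_real_power)
  then have "((norm (K x))\<^sup>2)\<^sup>2 \<le> Re (cinner x (K x)) * Re (cinner (K x) (K (K x)))"
    using cinner_op_Cauchy_Schwarz[OF assms(1) pos, of x "K x"] by (simp only:)
  also have "\<dots> \<le> Re (cinner x (K x)) * (M * (norm (K x))\<^sup>2)"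
  proof (rule mult_left_mono[OF _ pos])
    have "Re (cinner (K x) (K (K x))) \<le> norm (K x) * norm (K (K x))"
      using complex_Re_le_cmod norm_cinner_le order_trans by blast
    also have "\<dots> \<le> norm (K x) * (M * norm (K x))" by (intro mult_left_mono bound) auto
    finally show "Re (cinner (K x) (K (K x))) \<le> M * (norm (K x))\<^sup>2"
      by (simp add: power2_eq_square algebra_simps)
  qed
  finally have "(norm (K x))\<^sup>2 * (norm (K x))\<^sup>2 \<le> (M * Re (cinner x (K x))) * (norm (K x))\<^sup>2"
    by (simp add: power2_eq_square algebra_simps)
  then show ?thesis by (rule mult_right_le_imp_le) (use False in simp)
qed (use bound in simp)

lemma cmod_cinner_power2_le_nonneg_op:
  assumes "self_adjoint_op UNIV K" "nonneg_op K" and bound: "\<And>x. norm (K x) \<le> M * norm x"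
  shows "(cmod (cinner (K x) y))\<^sup>2 \<le> M * Re (cinner x (K x)) * (norm y)\<^sup>2"
proof -
  have "(cmod (cinner (K x) y))\<^sup>2 \<le> (norm (K x) * norm y)\<^sup>2"
    by (intro power_mono norm_cinner_le) simp
  also have "\<dots> \<le> M * Re (cinner x (K x)) * (norm y)\<^sup>2"
    unfolding power_mult_distrib
    by (intro mult_right_mono norm_power2_le_nonneg_op[OF assms]) simp
  finally show ?thesis .
qed

section \<open>Resolvents\<close>

definition resolvent :: "'a::chilbert_space set \<Rightarrow> ('a \<Rightarrow> 'a) \<Rightarrow> complex \<Rightarrow> 'a \<Rightarrow> 'a" where
  "resolvent D A l u = (THE x. x \<in> D \<and> A x - l *\<^sub>C x = u)"

lemma resolvent_solves:
  assumes "l \<notin> op_spectrum D A"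
  shows "resolvent D A l u \<in> D \<and> A (resolvent D A l u) - l *\<^sub>C resolvent D A l u = u"
proof -
  have bij: "bij_betw (\<lambda>x. A x - l *\<^sub>C x) D UNIV"
    using assms unfolding op_spectrum_def by blast
  then have "u \<in> (\<lambda>x. A x - l *\<^sub>C x) ` D" by (simp add: bij_betw_def)
  then obtain x where x: "x \<in> D" "A x - l *\<^sub>C x = u" by blast
  have "y = x" if "y \<in> D" "A y - l *\<^sub>C y = u" for y
    using inj_onD[OF bij_betw_imp_inj_on[OF bij], of y x] that x by simp
  with x have "\<exists>!x. x \<in> D \<and> A x - l *\<^sub>C x = u" by blast
  then show ?thesis
    unfolding resolvent_def by (rule theI')
qed

lemma resolvent_unique:
  assumes "l \<notin> op_spectrum D A" "x \<in> D" "A x - l *\<^sub>C x = u"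
  shows "resolvent D A l u = x"
proof -
  have "inj_on (\<lambda>x. A x - l *\<^sub>C x) D"
    using assms(1) unfolding op_spectrum_def bij_betw_def by blast
  then show ?thesis
    by (rule inj_onD) (use resolvent_solves[OF assms(1), of u] assms(2,3) in auto)
qed

lemma clinear_on_resolvent:
  assumes "complex_subspace D" "clinear_on D A" "l \<notin> op_spectrum D A"
  shows "clinear_on UNIV (resolvent D A l)"
proof -
  let ?R = "resolvent D A l"
  have lin: "clinear_on D (\<lambda>x. A x - l *\<^sub>C x)"
    using assms(2) by (rule clinear_on_shift)
  note R = resolvent_solves[OF assms(3)]
  have "?R (u + v) = ?R u + ?R v" for u v
    using R[of u] R[of v] clinear_on_add[OF lin, of "?R u" "?R v"]
    by (intro resolvent_unique[OF assms(3)] complex_subspace_add[OF assms(1)]) auto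
  moreover have "?R (c *\<^sub>C u) = c *\<^sub>C ?R u" for c u
    using R[of u] clinear_on_scaleC[OF lin, of "?R u" c]
    by (intro resolvent_unique[OF assms(3)] complex_subspace_scaleC[OF assms(1)]) auto
  ultimately show ?thesis unfolding clinear_on_def by blast
qed

lemma bounded_op_resolvent:
  assumes "complex_subspace D" "clinear_on D A" "l \<notin> op_spectrum D A"
  shows "bounded_op (resolvent D A l)"
proof -
  obtain C where C: "\<And>x. x \<in> D \<Longrightarrow> norm x \<le> C * norm (A x - l *\<^sub>C x)"
    using assms(3) unfolding op_spectrum_def by blast
  have "norm (resolvent D A l u) \<le> C * norm u" for u
    using C[of "resolvent D A l u"] resolvent_solves[OF assms(3), of u] by simp
  with clinear_on_resolvent[OF assms] show ?thesis
    unfolding bounded_op_def by blast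
qed

lemma self_adjoint_op_resolvent:
  assumes sa: "self_adjoint_op D A" and c: "of_real c \<notin> op_spectrum D A"
  shows "self_adjoint_op UNIV (resolvent D A (of_real c))"
proof -
  let ?R = "resolvent D A (of_real c)"
  have cs: "complex_subspace D" and lin: "clinear_on D A"
    using sa unfolding self_adjoint_op_def by auto
  note R = resolvent_solves[OF c]
  have "cinner (?R u) v = cinner u (?R v)" for u v
  proof -
    have "cinner (?R u) v = cinner (?R u) (A (?R v) - of_real c *\<^sub>C ?R v)"
      using R[of v] by simp
    also have "\<dots> = cinner (A (?R u) - of_real c *\<^sub>C ?R u) (?R v)"
      using self_adjoint_op_cinner_commute[OF sa R[THEN conjunct1] R[THEN conjunct1]]
      by (simp add: cinner_diff_left cinner_diff_right cinner_scaleC_left cinner_scaleC_right)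
    also have "\<dots> = cinner u (?R v)"
      using R[of u] by simp
    finally show ?thesis .
  qed
  with clinear_on_resolvent[OF cs lin c] show ?thesis
    unfolding self_adjoint_op_UNIV_iff by blast
qed

lemma resolvent_identity:
  assumes "complex_subspace D" "clinear_on D A" "l \<notin> op_spectrum D A" "m \<notin> op_spectrum D A"
  shows "resolvent D A l u - resolvent D A m u = (l - m) *\<^sub>C resolvent D A l (resolvent D A m u)"
proof -
  define v where "v = resolvent D A m u"
  define w where "w = resolvent D A l v"
  have v: "v \<in> D" "A v - m *\<^sub>C v = u" and w: "w \<in> D" "A w - l *\<^sub>C w = v"
    unfolding v_def w_def using resolvent_solves assms(3,4) by blast+
  have lin: "clinear_on D (\<lambda>x. A x - l *\<^sub>C x)"
    using assms(2) by (rule clinear_on_shift)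
  have "A (v + (l - m) *\<^sub>C w) - l *\<^sub>C (v + (l - m) *\<^sub>C w)
      = (A v - l *\<^sub>C v) + (l - m) *\<^sub>C (A w - l *\<^sub>C w)"
    using clinear_on_add[OF lin v(1) complex_subspace_scaleC[OF assms(1) w(1)]]
      clinear_on_scaleC[OF lin w(1)]
    by simp
  also have "A v - l *\<^sub>C v = u - (l - m) *\<^sub>C v"
    using v(2) by (simp add: scaleC_diff_left algebra_simps)
  finally have "A (v + (l - m) *\<^sub>C w) - l *\<^sub>C (v + (l - m) *\<^sub>C w) = u"
    by (simp add: w(2))
  then have "resolvent D A l u = v + (l - m) *\<^sub>C w"
    using assms(1) v(1) w(1)
    by (intro resolvent_unique[OF assms(3)] complex_subspace_add complex_subspace_scaleC)
  then show ?thesis by (simp add: v_def w_def)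
qed

text \<open>By the resolvent identity, \<open>R\<^sub>c z - R\<^sub>d z = (c - d) R\<^sub>c R\<^sub>d z\<close>; both forms vanishing
  makes \<open>R\<^sub>c z \<bottom> R\<^sub>d z\<close>, and Pythagoras against \<open>\<parallel>R\<^sub>c z - R\<^sub>d z\<parallel> \<le> \<parallel>R\<^sub>d z\<parallel>\<close> forces \<open>R\<^sub>c z = 0\<close>.\<close>
lemma eq_0_if_resolvent_forms_vanish:
  assumes sa: "self_adjoint_op D A"
    and c: "of_real c \<notin> op_spectrum D A" and d: "of_real d \<notin> op_spectrum D A" and "c \<noteq> d"
    and bound: "\<And>u. norm (resolvent D A (of_real c) u) \<le> C * norm u"
    and close: "\<bar>c - d\<bar> * C \<le> 1"
    and form_c: "cinner z (resolvent D A (of_real c) z) = 0"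
    and form_d: "cinner z (resolvent D A (of_real d) z) = 0"
  shows "z = 0"
proof -
  let ?Rc = "resolvent D A (of_real c)" and ?Rd = "resolvent D A (of_real d)"
  have cs: "complex_subspace D" and lin: "clinear_on D A"
    using sa unfolding self_adjoint_op_def by auto
  have diff: "?Rc z - ?Rd z = (c - d) *\<^sub>R ?Rc (?Rd z)"
    using resolvent_identity[OF cs lin c d] by (simp flip: scaleC_of_real)
  have "of_real (c - d) * cinner z (?Rc (?Rd z)) = 0"
    using arg_cong[OF diff, of "cinner z"] form_c form_d
    by (simp add: cinner_diff_right cinner_scaleR_right)
  then have "cinner (?Rc z) (?Rd z) = 0"
    using \<open>c \<noteq> d\<close> self_adjoint_op_resolvent[OF sa c] unfolding self_adjoint_op_UNIV_iff by simp
  then have "(norm (?Rc z - ?Rd z))\<^sup>2 = (norm (?Rc z))\<^sup>2 + (norm (?Rd z))\<^sup>2"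
    by (simp add: norm_diff_power2)
  moreover have "norm (?Rc z - ?Rd z) \<le> norm (?Rd z)"
  proof -
    have "norm (?Rc z - ?Rd z) \<le> \<bar>c - d\<bar> * (C * norm (?Rd z))"
      unfolding diff by (simp add: mult_left_mono bound)
    also have "\<dots> \<le> norm (?Rd z)"
      using mult_right_mono[OF close norm_ge_zero] by (simp add: mult.assoc)
    finally show ?thesis .
  qed
  ultimately have "(norm (?Rc z))\<^sup>2 \<le> 0"
    using power_mono[OF \<open>norm (?Rc z - ?Rd z) \<le> norm (?Rd z)\<close> norm_ge_zero, of 2] by linarith
  then have "?Rc z = 0" by simp
  then show "z = 0"
    using resolvent_solves[OF c, of z] clinear_on_zero[OF cs lin] by simp
qed

section \<open>Spectra of the perturbations \<open>A + t B\<close>\<close>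

lemma in_op_spectrumI:
  assumes approx: "\<And>e. e > 0 \<Longrightarrow> \<exists>x\<in>D. x \<noteq> 0 \<and> norm (T x - l *\<^sub>C x) \<le> e * norm x"
  shows "l \<in> op_spectrum D T"
proof -
  have "\<not> (\<exists>C. \<forall>x\<in>D. norm x \<le> C * norm (T x - l *\<^sub>C x))"
  proof
    assume "\<exists>C. \<forall>x\<in>D. norm x \<le> C * norm (T x - l *\<^sub>C x)"
    then obtain C where C: "\<And>x. x \<in> D \<Longrightarrow> norm x \<le> C * norm (T x - l *\<^sub>C x)" by blast
    define e where "e = 1 / (2 * (\<bar>C\<bar> + 1))"
    have "e > 0" by (simp add: e_def add_pos_nonneg)
    then obtain x where "x \<in> D" "x \<noteq> 0" and small: "norm (T x - l *\<^sub>C x) \<le> e * norm x"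
      using approx by blast
    have "norm x \<le> \<bar>C\<bar> * norm (T x - l *\<^sub>C x)"
      using C[OF \<open>x \<in> D\<close>] mult_right_mono[OF abs_ge_self norm_ge_zero, of C "T x - l *\<^sub>C x"]
      by linarith
    also have "\<dots> \<le> \<bar>C\<bar> * (e * norm x)"
      using small by (simp add: mult_left_mono)
    also have "\<dots> \<le> 1 / 2 * norm x"
    proof -
      have "\<bar>C\<bar> * e \<le> 1 / 2" by (simp add: e_def field_simps)
      then show ?thesis using mult_right_mono[OF _ norm_ge_zero, of "\<bar>C\<bar> * e" "1 / 2" x]
        by (simp add: mult.assoc)
    qed
    also have "\<dots> < norm x"
      using \<open>x \<noteq> 0\<close> by simp
    finally show False by simp
  qed
  then show ?thesis unfolding op_spectrum_def by blast
qed

lemma exists_sup_ratio: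
  fixes p q :: "'b \<Rightarrow> real"
  assumes p: "\<And>y. 0 \<le> p y" and bound: "\<And>y. q y \<le> K * p y" and "q x > 0"
  shows "\<exists>M>0. (\<forall>y. q y \<le> M * p y) \<and> (\<forall>e>0. \<exists>y. 0 < p y \<and> (M - e) * p y < q y)"
proof -
  define S where "S = {q y / p y | y. 0 < p y}"
  have "p x \<noteq> 0"
  proof
    assume "p x = 0"
    with bound[of x] \<open>q x > 0\<close> show False by simp
  qed
  with p[of x] have "p x > 0" by simp
  then have "q x / p x \<in> S" unfolding S_def by blast
  have "bdd_above S"
  proof (rule bdd_aboveI)
    fix v assume "v \<in> S"
    then obtain y where "v = q y / p y" "0 < p y" unfolding S_def by blast
    then show "v \<le> K" using bound[of y] by (simp add: pos_divide_le_eq)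
  qed
  define M where "M = Sup S"
  have "q x / p x \<le> M"
    unfolding M_def using \<open>q x / p x \<in> S\<close> \<open>bdd_above S\<close> by (rule cSup_upper)
  moreover have "0 < q x / p x" using \<open>q x > 0\<close> \<open>p x > 0\<close> by simp
  ultimately have "M > 0" by linarith
  moreover have "q y \<le> M * p y" for y
  proof (cases "p y > 0")
    case True
    then have "q y / p y \<in> S" unfolding S_def by blast
    then have "q y / p y \<le> M"
      unfolding M_def using \<open>bdd_above S\<close> by (rule cSup_upper)
    with True show ?thesis by (simp add: pos_divide_le_eq)
  next
    case False
    with p[of y] have "p y = 0" by simp
    with bound[of y] show ?thesis by simp
  qed
  moreover have "\<exists>y. 0 < p y \<and> (M - e) * p y < q y" if "e > 0" for e
  proof -
    have "M - e < Sup S" using that by (simp add: M_def)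
    then obtain v where "v \<in> S" "M - e < v"
      using less_cSupD[of S] \<open>q x / p x \<in> S\<close> by blast
    then obtain y where "0 < p y" "M - e < q y / p y" unfolding S_def by blast
    then show ?thesis by (auto simp: pos_less_divide_eq)
  qed
  ultimately show ?thesis by (intro exI[of _ M]) blast
qed

text \<open>With \<open>R = (A - c)\<^sup>-\<^sup>1\<close>, \<open>p y = \<langle>y, B y\<rangle>\<close>, \<open>q y = s \<langle>B y, R B y\<rangle>\<close> and \<open>M = sup q / p\<close>, the
  operator \<open>Q = M B - s B R B\<close> is non-negative and \<open>(A + t B - c) R B = Q / M\<close> for \<open>t = -s / M\<close>;
  vectors \<open>y\<close> almost attaining the supremum make \<open>\<langle>y, Q y\<rangle>\<close>, hence \<open>Q y\<close>, small compared with
  \<open>R B y\<close>, which is then an approximate eigenvector of \<open>A + t B\<close> for \<open>c\<close>.\<close>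
lemma in_op_spectrum_perturbation:
  fixes B :: "'a::chilbert_space \<Rightarrow> 'a"
  assumes sa: "self_adjoint_op D A" and B: "self_adjoint_op UNIV B" "bounded_op B" "nonneg_op B"
    and c: "of_real c \<notin> op_spectrum D A" and "s * s = 1" "M > 0"
    and le: "\<And>y. s * Re (cinner (B y) (resolvent D A (of_real c) (B y))) \<le> M * Re (cinner y (B y))"
    and sup: "\<And>e. e > 0 \<Longrightarrow> \<exists>y. 0 < Re (cinner y (B y)) \<and>
      (M - e) * Re (cinner y (B y)) < s * Re (cinner (B y) (resolvent D A (of_real c) (B y)))"
  shows "of_real c \<in> op_spectrum D (\<lambda>x. A x + (- s / M) *\<^sub>R B x)"
proof -
  let ?R = "resolvent D A (of_real c)"
  define p where "p y = Re (cinner y (B y))" for y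
  define q where "q y = s * Re (cinner (B y) (?R (B y)))" for y
  define Q where "Q y = M *\<^sub>R B y - s *\<^sub>R B (?R (B y))" for y
  have cs: "complex_subspace D" and lin: "clinear_on D A"
    using sa unfolding self_adjoint_op_def by auto
  have R_sa: "self_adjoint_op UNIV ?R" and R_bounded: "bounded_op ?R"
    using self_adjoint_op_resolvent[OF sa c] bounded_op_resolvent[OF cs lin c] by auto
  obtain KB where "KB > 0" and KB: "\<And>x. norm (B x) \<le> KB * norm x"
    using bounded_opE[OF B(2)] by blast
  have Q_form: "Re (cinner y (Q y)) = M * p y - q y" for y
    using B(1) unfolding Q_def p_def q_def self_adjoint_op_UNIV_iff
    by (simp add: cinner_diff_right cinner_scaleR_right)
  have Q_sa: "self_adjoint_op UNIV Q"
    using B(1) R_sa unfolding self_adjoint_op_UNIV_iff clinear_on_def Q_def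
    by (simp add: cinner_diff_left cinner_diff_right cinner_scaleR_left cinner_scaleR_right
        scaleC_diff_right scaleC_scaleR_commute scaleR_add_right)
  have "nonneg_op Q"
    using Q_sa by (rule nonneg_opI) (use le in \<open>simp add: Q_form p_def q_def\<close>)
  have "bounded_op Q"
    unfolding Q_def
    by (intro bounded_op_diff bounded_op_scaleR B(2)
        bounded_op_comp[OF B(2) bounded_op_comp[OF R_bounded B(2)]])
  then obtain KQ where "KQ > 0" and KQ: "\<And>x. norm (Q x) \<le> KQ * norm x"
    using bounded_opE by blast
  have shift: "A (?R (B y)) + (- s / M) *\<^sub>R B (?R (B y)) - of_real c *\<^sub>C ?R (B y) = (1 / M) *\<^sub>R Q y"
    for y
    using resolvent_solves[OF c, of "B y"] \<open>M > 0\<close>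
    by (simp add: Q_def algebra_simps)
  show ?thesis
  proof (rule in_op_spectrumI)
    fix \<epsilon> :: real assume "\<epsilon> > 0"
    define e where "e = min (M / 2) (\<epsilon>\<^sup>2 * (M\<^sup>2 * M\<^sup>2) / (4 * KQ * KB))"
    have "e > 0" using \<open>\<epsilon> > 0\<close> \<open>M > 0\<close> \<open>KQ > 0\<close> \<open>KB > 0\<close> by (simp add: e_def)
    have e_le: "e * (4 * KQ * KB) \<le> \<epsilon>\<^sup>2 * (M\<^sup>2 * M\<^sup>2)"
      using \<open>KQ > 0\<close> \<open>KB > 0\<close> by (simp add: e_def flip: pos_le_divide_eq)
    obtain y where "0 < p y" and near: "(M - e) * p y < q y"
      using sup[OF \<open>e > 0\<close>] unfolding p_def q_def by blast
    define r where "r = ?R (B y)"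
    define N where "N = norm (A r + (- s / M) *\<^sub>R B r - of_real c *\<^sub>C r)"
    have "N * M = norm (Q y)"
      using shift \<open>M > 0\<close> by (simp add: N_def r_def)
    then have "(N * M)\<^sup>2 \<le> KQ * (M * p y - q y)"
      using norm_power2_le_nonneg_op[OF Q_sa \<open>nonneg_op Q\<close> KQ] by (simp add: Q_form)
    also have "\<dots> \<le> KQ * (e * p y)"
      using near \<open>KQ > 0\<close> by (intro mult_left_mono) (simp_all add: algebra_simps)
    finally have N: "N\<^sup>2 * M\<^sup>2 \<le> KQ * e * p y"
      by (simp add: power_mult_distrib mult.assoc)
    have "M / 2 * p y \<le> (M - e) * p y"
      using \<open>0 < p y\<close> by (intro mult_right_mono) (auto simp: e_def)
    with near have "M / 2 * p y \<le> q y" by linarith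
    then have "(M / 2 * p y)\<^sup>2 \<le> (q y)\<^sup>2"
      using \<open>0 < p y\<close> \<open>M > 0\<close> by (intro power_mono) auto
    also have "\<dots> = (Re (cinner (B y) r))\<^sup>2"
      using \<open>s * s = 1\<close> by (simp add: q_def r_def power_mult_distrib power2_eq_square[of s])
    also have "\<dots> \<le> (cmod (cinner (B y) r))\<^sup>2"
      by (rule abs_le_square_iff[THEN iffD1]) (simp add: abs_Re_le_cmod)
    also have "\<dots> \<le> KB * p y * (norm r)\<^sup>2"
      unfolding p_def by (rule cmod_cinner_power2_le_nonneg_op[OF B(1,3) KB])
    finally have "M\<^sup>2 * p y * p y \<le> 4 * KB * (norm r)\<^sup>2 * p y"
      by (simp add: field_simps power2_eq_square)
    then have r: "M\<^sup>2 * p y \<le> 4 * KB * (norm r)\<^sup>2"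
      using \<open>0 < p y\<close> by (rule mult_right_le_imp_le)
    have "N\<^sup>2 * M\<^sup>2 * M\<^sup>2 \<le> KQ * e * p y * M\<^sup>2"
      using N by (rule mult_right_mono) simp
    also have "\<dots> = KQ * e * (M\<^sup>2 * p y)"
      by (simp add: algebra_simps)
    also have "\<dots> \<le> KQ * e * (4 * KB * (norm r)\<^sup>2)"
      using r \<open>KQ > 0\<close> \<open>e > 0\<close> by (intro mult_left_mono) auto
    also have "\<dots> = e * (4 * KQ * KB) * (norm r)\<^sup>2"
      by (simp add: algebra_simps)
    also have "\<dots> \<le> \<epsilon>\<^sup>2 * (M\<^sup>2 * M\<^sup>2) * (norm r)\<^sup>2"
      using e_le by (rule mult_right_mono) simp
    finally have "N\<^sup>2 * (M\<^sup>2 * M\<^sup>2) \<le> (\<epsilon> * norm r)\<^sup>2 * (M\<^sup>2 * M\<^sup>2)"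
      by (simp add: algebra_simps)
    then have "N\<^sup>2 \<le> (\<epsilon> * norm r)\<^sup>2"
      by (rule mult_right_le_imp_le) (use \<open>M > 0\<close> in simp)
    then have "N \<le> \<epsilon> * norm r"
      by (rule power2_le_imp_le) (use \<open>\<epsilon> > 0\<close> in simp)
    moreover have "r \<noteq> 0"
    proof
      assume "r = 0"
      with r have "M\<^sup>2 * p y \<le> 0" by simp
      with \<open>0 < p y\<close> \<open>M > 0\<close> show False by (simp add: mult_le_0_iff)
    qed
    moreover have "r \<in> D"
      using resolvent_solves[OF c, of "B y"] by (simp add: r_def)
    ultimately show "\<exists>x\<in>D. x \<noteq> 0 \<and>
        norm (A x + (- s / M) *\<^sub>R B x - of_real c *\<^sub>C x) \<le> \<epsilon> * norm x"
      unfolding N_def by (intro bexI[of _ r]) auto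
  qed
qed

lemma cinner_resolvent_eq_0_if_regular:
  fixes B :: "'a::chilbert_space \<Rightarrow> 'a"
  assumes sa: "self_adjoint_op D A" and B: "self_adjoint_op UNIV B" "bounded_op B" "nonneg_op B"
    and regular: "\<And>t. of_real c \<notin> op_spectrum D (\<lambda>x. A x + t *\<^sub>R B x)"
  shows "cinner (B x) (resolvent D A (of_real c) (B x)) = 0"
proof -
  let ?R = "resolvent D A (of_real c)"
  define p where "p y = Re (cinner y (B y))" for y
  define q where "q y = Re (cinner (B y) (?R (B y)))" for y
  have c: "of_real c \<notin> op_spectrum D A"
    using regular[of 0] by simp
  have cs: "complex_subspace D" and lin: "clinear_on D A"
    using sa unfolding self_adjoint_op_def by auto
  have R_sa: "self_adjoint_op UNIV ?R"
    using sa c by (rule self_adjoint_op_resolvent)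
  obtain C where "C > 0" and C: "\<And>u. norm (?R u) \<le> C * norm u"
    using bounded_opE[OF bounded_op_resolvent[OF cs lin c]] by blast
  obtain KB where KB: "\<And>x. norm (B x) \<le> KB * norm x"
    using bounded_opE[OF B(2)] by blast
  have q_le: "\<bar>q y\<bar> \<le> C * KB * p y" for y
  proof -
    have "\<bar>q y\<bar> \<le> norm (B y) * norm (?R (B y))"
      unfolding q_def using abs_Re_le_cmod norm_cinner_le order_trans by blast
    also have "\<dots> \<le> norm (B y) * (C * norm (B y))"
      by (intro mult_left_mono C) simp
    also have "\<dots> = C * (norm (B y))\<^sup>2"
      by (simp add: power2_eq_square)
    also have "\<dots> \<le> C * (KB * p y)"
      using norm_power2_le_nonneg_op[OF B(1,3) KB, of y] \<open>C > 0\<close>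
      by (intro mult_left_mono) (auto simp: p_def)
    finally show ?thesis by (simp add: mult.assoc)
  qed
  have "q x = 0"
  proof (rule ccontr)
    assume "q x \<noteq> 0"
    define s :: real where "s = (if q x > 0 then 1 else -1)"
    have "s * s = 1" "0 < s * q x" and s_le: "\<And>y. s * q y \<le> \<bar>q y\<bar>"
      using \<open>q x \<noteq> 0\<close> by (auto simp: s_def)
    have "\<exists>M>0. (\<forall>y. s * q y \<le> M * p y) \<and> (\<forall>e>0. \<exists>y. 0 < p y \<and> (M - e) * p y < s * q y)"
    proof (rule exists_sup_ratio)
      show "0 \<le> p y" for y
        unfolding p_def using B(3) by (rule nonneg_op_Re_cinner)
      show "s * q y \<le> C * KB * p y" for y
        using s_le[of y] q_le[of y] by linarith
    qed fact
    then obtain M where "M > 0" and "\<forall>y. s * q y \<le> M * p y"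
      and "\<forall>e>0. \<exists>y. 0 < p y \<and> (M - e) * p y < s * q y"
      by blast
    then have "of_real c \<in> op_spectrum D (\<lambda>x. A x + (- s / M) *\<^sub>R B x)"
      using \<open>s * s = 1\<close>
      by (intro in_op_spectrum_perturbation[OF sa B c]) (auto simp: p_def q_def)
    with regular show False by blast
  qed
  moreover have "Im (cinner (B x) (?R (B x))) = 0"
    using self_adjoint_op_Im_cinner[OF R_sa] by simp
  ultimately show ?thesis
    by (simp add: q_def complex_eq_iff)
qed

lemma exists_perturbed_spectrum_near:
  fixes B :: "'a::chilbert_space \<Rightarrow> 'a"
  assumes sa: "self_adjoint_op D A" and B: "self_adjoint_op UNIV B" "bounded_op B" "nonneg_op B"
    and "\<exists>x. B x \<noteq> 0" and "e > 0"
  shows "\<exists>t c. \<bar>c - r\<bar> < e \<and> of_real c \<in> op_spectrum D (\<lambda>x. A x + t *\<^sub>R B x)"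
proof (rule ccontr)
  assume "\<not> ?thesis"
  then have regular: "\<And>c t. \<bar>c - r\<bar> < e \<Longrightarrow> of_real c \<notin> op_spectrum D (\<lambda>x. A x + t *\<^sub>R B x)"
    by blast
  have not_spec: "of_real c \<notin> op_spectrum D A" if "\<bar>c - r\<bar> < e" for c
    using regular[OF that, of 0] by simp
  have cs: "complex_subspace D" and lin: "clinear_on D A"
    using sa unfolding self_adjoint_op_def by auto
  have r_regular: "of_real r \<notin> op_spectrum D A"
    using not_spec \<open>e > 0\<close> by simp
  then obtain C where "C > 0" and C: "\<And>u. norm (resolvent D A (of_real r) u) \<le> C * norm u"
    using bounded_opE[OF bounded_op_resolvent[OF cs lin]] by blast
  define \<delta> where "\<delta> = min (e / 2) (1 / C)"
  have "0 < \<delta>" "\<delta> < e" "\<delta> * C \<le> 1"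
    using \<open>e > 0\<close> \<open>C > 0\<close> by (auto simp: \<delta>_def min_def field_simps)
  define d where "d = r + \<delta>"
  have "\<bar>d - r\<bar> < e" "r \<noteq> d" "\<bar>r - d\<bar> * C \<le> 1"
    using \<open>0 < \<delta>\<close> \<open>\<delta> < e\<close> \<open>\<delta> * C \<le> 1\<close> by (simp_all add: d_def)
  have "B x = 0" for x
    using \<open>e > 0\<close> \<open>\<bar>d - r\<bar> < e\<close>
    by (intro eq_0_if_resolvent_forms_vanish[OF sa r_regular not_spec \<open>r \<noteq> d\<close> C
          \<open>\<bar>r - d\<bar> * C \<le> 1\<close>] cinner_resolvent_eq_0_if_regular[OF sa B] regular) auto
  with \<open>\<exists>x. B x \<noteq> 0\<close> show False by blast
qed

theorem corollary2p6:
  fixes D :: "'a::chilbert_space set" and A B :: "'a \<Rightarrow> 'a"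
  assumes "self_adjoint_op D A"
    and "self_adjoint_op UNIV B" and "bounded_op B" and "nonneg_op B"
    and "\<exists>x. B x \<noteq> 0"
  shows "(\<Union>t::real. op_spectrum D (\<lambda>x. A x + t *\<^sub>R B x)) \<subseteq> \<real>
     \<and> closure {r::real. complex_of_real r \<in> (\<Union>t::real. op_spectrum D (\<lambda>x. A x + t *\<^sub>R B x))} = UNIV"
proof
  show "(\<Union>t. op_spectrum D (\<lambda>x. A x + t *\<^sub>R B x)) \<subseteq> \<real>"
    using self_adjoint_op_spectrum_real[OF self_adjoint_op_add_scaleR[OF assms(1,2)]] by blast
  have "r \<in> closure {r. complex_of_real r \<in> (\<Union>t. op_spectrum D (\<lambda>x. A x + t *\<^sub>R B x))}" for r
    unfolding closure_approachable dist_real_def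
    using exists_perturbed_spectrum_near[OF assms, of _ r] by fast
  then show "closure {r. complex_of_real r \<in> (\<Union>t. op_spectrum D (\<lambda>x. A x + t *\<^sub>R B x))} = UNIV"
    by blast
qed

end
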